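(* Let $\mathcal{D}$ be a liability category, let $N=(G,X,\lambda,\iota;\delta,\hat\alpha)$ be a liability network in $\mathcal{D}$ with underlying finite directed graph $G=(V,E,s,t)$, and let $\mathcal{L}$ be its liability sheaf on the liability hypergraph $\mathcal{H}_G$. Then the assignment sending a global section $\sigma\in\Gamma(\mathcal{H}_G;\mathcal{L})$ to the family of its components $(x_v)_{v\in V}$, $x_v=\sigma_v:1\to X_v$, and $(p_e)_{e\in E}$, $p_e=\sigma_{e^*}:1\to X_{s(e)}^{\lambda_e}$, is a bijection from $\Gamma(\mathcal{H}_G;\mathcal{L})$ onto the set of families of global elements $x_v:1\to X_v$ ($v\in V$), $p_e:1\to X_{s(e)}^{\lambda_e}$ ($e\in E$) satisfying \[ p_e=\delta_e\circ x_{s(e)}\ \text{ for all } e\in E,\qquad x_v=\alpha_v\circ\langle p_e\rangle_{t(e)=v}\ \text{ for all } v\in V. \] In other words, a global section is uniquely determined by such elements satisfying these two equations, and every such family arises from a global section.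
   Context: A liability category is a category $\mathcal{D}$ such that: (1) $\mathcal{D}$ has a terminal object $1$, all finite products, and equalizers; (2) for each object $P$ the set $\mathrm{Hom}(1,P)$ of global elements carries a partial order $\leqslant$, and for each morphism $f:P\to Q$ the map $f_*:\mathrm{Hom}(1,P)\to\mathrm{Hom}(1,Q)$, $\rho\mapsto f\circ\rho$, is order-preserving; (3) for each $P$ there is a distinguished class $\mathcal{S}_P$ of monomorphisms $m:P^c\hookrightarrow P$ (one representative per subobject class), called constraint subobjects, stable under pullback: if $m\in\mathcal{S}_P$ and $f:Q\to P$, a chosen pullback $f^*m$ lies in $\mathcal{S}_Q$; (4) for each $P$ a bound selector $\beta_P:\mathrm{Hom}(1,P)\to\mathcal{S}_P$; (5) for every finite family $(P_i)$ the canonical map $\mathrm{Hom}(1,\prod_i P_i)\to\prod_i\mathrm{Hom}(1,P_i)$ is an order isomorphism for the componentwise order. A liability network in $\mathcal{D}$ is $N=(G,X,\lambda,\iota;\delta,\hat\alpha)$ where $G=(V,E,s,t)$ is a finite directed graph; $X_v\in\mathcal{D}$ ($v\in V$) are payment objects; $\lambda_e:1\to X_{s(e)}$ ($e\in E$) are liability morphisms; $\iota_v:1\to X_v$ are exogenous resource morphisms; writing $X_{s(e)}^{\lambda_e}$ for the domain of the constraint subobject $\beta_{X_{s(e)}}(\lambda_e)\hookrightarrow X_{s(e)}$, $\delta_e:X_{s(e)}\to X_{s(e)}^{\lambda_e}$ are distributor morphisms; and $\hat\alpha_v:X_v\times\prod_{t(e)=v}X_{s(e)}^{\lambda_e}\to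 X_v$ are aggregator morphisms. The partial aggregator is $\alpha_v:=\hat\alpha_v\circ(\iota_v\times\mathrm{id}):\prod_{t(e)=v}X_{s(e)}^{\lambda_e}\to X_v$ (via $\prod\cong 1\times\prod$); an empty product is the terminal object $1$. The liability hypergraph $\mathcal{H}_G$ has vertex set $V\sqcup\{e^*:e\in E\}$ and hyperedges $h_v^{\delta}$ ($v\in V$) with source $\{v\}$ and target $\{e^*:s(e)=v\}$, and $h_v^{\alpha}$ ($v\in V$) with empty source and target $\{e^*:t(e)=v\}\cup\{v\}$. Its incidence category $\mathcal{I}(\mathcal{H}_G)$ has as objects the vertices and hyperedges, with exactly one morphism $h\to w$ for each hyperedge $h$ and each vertex $w$ in the source or target of $h$, plus identities, and no other morphisms. The liability sheaf is the functor $\mathcal{L}:\mathcal{I}(\mathcal{H}_G)\to\mathcal{D}$ with $\mathcal{L}(v)=X_v$, $\mathcal{L}(e^* )=X_{s(e)}^{\lambda_e}$, $\mathcal{L}(h_v^\delta)=X_v$, $\mathcal{L}(h_v^\alpha)=\prod_{t(e)=v}X_{s(e)}^{\lambda_e}$, and $\mathcal{L}(h_v^\delta\to v)=\mathrm{id}_{X_v}$, $\mathcal{L}(h_v^\delta\to e^* )=\delta_e$, $\mathcal{L}(h_v^\alpha\to e^* )=\pi_e$ (product projection), $\mathcal{L}(h_v^\alpha\to v)=\alpha_v$. The global-section object is $H^0(\mathcal{H}_G;\mathcal{L})=\lim_{\mathcal{I}(\mathcal{H}_G)}\mathcal{L}$ and the set of global sections is $\Gamma(\mathcal{H}_G;\mathcal{L})=\mathrm{Hom}_{\mathcal{D}}(1,H^0(\mathcal{H}_G;\mathcal{L}))$;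 for $\sigma\in\Gamma$ and an object $y$ of $\mathcal{I}(\mathcal{H}_G)$, $\sigma_y$ denotes the composite of $\sigma$ with the limit projection to $\mathcal{L}(y)$. *)

theory Defs
  imports "HOL-Library.FuncSet"
begin

record ('o,'m) cat =
  Ob  :: "'o set"
  Ar  :: "'m set"
  Dom :: "'m \<Rightarrow> 'o"
  Cod :: "'m \<Rightarrow> 'o"
  Cmp :: "'m \<Rightarrow> 'm \<Rightarrow> 'm"   (* Cmp g f = g o f *)
  Idn :: "'o \<Rightarrow> 'm"

definition hom :: "('o,'m,'z) cat_scheme \<Rightarrow> 'o \<Rightarrow> 'o \<Rightarrow> 'm set" where
  "hom C a b = {f \<in> Ar C. Dom C f = a \<and> Cod C f = b}"

definition category :: "('o,'m,'z) cat_scheme \<Rightarrow> bool" where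
  "category C \<longleftrightarrow>
     (\<forall>f\<in>Ar C. Dom C f \<in> Ob C \<and> Cod C f \<in> Ob C) \<and>
     (\<forall>a\<in>Ob C. Idn C a \<in> hom C a a) \<and>
     (\<forall>f\<in>Ar C. \<forall>g\<in>Ar C. Cod C f = Dom C g \<longrightarrow> Cmp C g f \<in> hom C (Dom C f) (Cod C g)) \<and>
     (\<forall>f\<in>Ar C. Cmp C (Idn C (Cod C f)) f = f \<and> Cmp C f (Idn C (Dom C f)) = f) \<and>
     (\<forall>f\<in>Ar C. \<forall>g\<in>Ar C. \<forall>h\<in>Ar C. Cod C f = Dom C g \<longrightarrow> Cod C g = Dom C h \<longrightarrow>
         Cmp C h (Cmp C g f) = Cmp C (Cmp C h g) f)"

definition terminal :: "('o,'m,'z) cat_scheme \<Rightarrow> 'o \<Rightarrow> bool" where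
  "terminal C t \<longleftrightarrow> t \<in> Ob C \<and> (\<forall>a\<in>Ob C. \<exists>!f. f \<in> hom C a t)"

definition term_map :: "('o,'m,'z) cat_scheme \<Rightarrow> 'o \<Rightarrow> 'o \<Rightarrow> 'm" where
  "term_map C t a = (THE f. f \<in> hom C a t)"

definition is_product ::
  "('o,'m,'z) cat_scheme \<Rightarrow> 'i set \<Rightarrow> ('i \<Rightarrow> 'o) \<Rightarrow> 'o \<Rightarrow> ('i \<Rightarrow> 'm) \<Rightarrow> bool" where
  "is_product C I Xs P pr \<longleftrightarrow> P \<in> Ob C \<and>
     (\<forall>i\<in>I. Xs i \<in> Ob C \<and> pr i \<in> hom C P (Xs i)) \<and>
     (\<forall>A\<in>Ob C. \<forall>f. (\<forall>i\<in>I. f i \<in> hom C A (Xs i)) \<longrightarrow>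
        (\<exists>!u. u \<in> hom C A P \<and> (\<forall>i\<in>I. Cmp C (pr i) u = f i)))"

definition tup ::
  "('o,'m,'z) cat_scheme \<Rightarrow> 'i set \<Rightarrow> 'o \<Rightarrow> ('i \<Rightarrow> 'm) \<Rightarrow> 'o \<Rightarrow> ('i \<Rightarrow> 'm) \<Rightarrow> 'm" where
  "tup C I P pr A f = (THE u. u \<in> hom C A P \<and> (\<forall>i\<in>I. Cmp C (pr i) u = f i))"

definition is_equalizer :: "('o,'m,'z) cat_scheme \<Rightarrow> 'm \<Rightarrow> 'm \<Rightarrow> 'o \<Rightarrow> 'm \<Rightarrow> bool" where
  "is_equalizer C f g E e \<longleftrightarrow> E \<in> Ob C \<and> e \<in> hom C E (Dom C f) \<and> Cmp C f e = Cmp C g e \<and>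
     (\<forall>A\<in>Ob C. \<forall>h\<in>hom C A (Dom C f). Cmp C f h = Cmp C g h \<longrightarrow>
        (\<exists>!u. u \<in> hom C A E \<and> Cmp C e u = h))"

definition mono :: "('o,'m,'z) cat_scheme \<Rightarrow> 'm \<Rightarrow> bool" where
  "mono C m \<longleftrightarrow> m \<in> Ar C \<and> (\<forall>A\<in>Ob C. \<forall>h\<in>hom C A (Dom C m). \<forall>k\<in>hom C A (Dom C m).
      Cmp C m h = Cmp C m k \<longrightarrow> h = k)"

definition same_subobject :: "('o,'m,'z) cat_scheme \<Rightarrow> 'm \<Rightarrow> 'm \<Rightarrow> bool" where
  "same_subobject C m m' \<longleftrightarrow> Cod C m = Cod C m' \<and>
     (\<exists>i\<in>hom C (Dom C m) (Dom C m'). \<exists>j\<in>hom C (Dom C m') (Dom C m).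
        Cmp C j i = Idn C (Dom C m) \<and> Cmp C i j = Idn C (Dom C m') \<and> Cmp C m' i = m)"

definition is_pullback :: "('o,'m,'z) cat_scheme \<Rightarrow> 'm \<Rightarrow> 'm \<Rightarrow> 'm \<Rightarrow> 'm \<Rightarrow> bool" where
  "is_pullback C f m f' m' \<longleftrightarrow>
     f \<in> Ar C \<and> m \<in> Ar C \<and> Cod C f = Cod C m \<and>
     m' \<in> hom C (Dom C m') (Dom C f) \<and> f' \<in> hom C (Dom C m') (Dom C m) \<and>
     Cmp C f m' = Cmp C m f' \<and>
     (\<forall>A\<in>Ob C. \<forall>a\<in>hom C A (Dom C f). \<forall>b\<in>hom C A (Dom C m). Cmp C f a = Cmp C m b \<longrightarrow>
        (\<exists>!u. u \<in> hom C A (Dom C m') \<and> Cmp C m' u = a \<and> Cmp C f' u = b))"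

record ('o,'m) lcat = "('o,'m) cat" +
  one  :: 'o
  leq  :: "'o \<Rightarrow> 'm \<Rightarrow> 'm \<Rightarrow> bool"   (* order on Hom(1,P) *)
  Sc   :: "'o \<Rightarrow> 'm set"
  beta :: "'o \<Rightarrow> 'm \<Rightarrow> 'm"

definition liability_category :: "('o,'m) lcat \<Rightarrow> bool" where
  "liability_category D \<longleftrightarrow>
     category D \<and> terminal D (one D) \<and>
     (\<forall>(n::nat) Xs. (\<forall>i<n. Xs i \<in> Ob D) \<longrightarrow> (\<exists>P pr. is_product D {..<n} Xs P pr)) \<and>
     (\<forall>f\<in>Ar D. \<forall>g\<in>Ar D. Dom D f = Dom D g \<and> Cod D f = Cod D g \<longrightarrow>
        (\<exists>E e. is_equalizer D f g E e)) \<and>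
     (\<forall>P\<in>Ob D. (\<forall>r\<in>hom D (one D) P. leq D P r r) \<and>
        (\<forall>r\<in>hom D (one D) P. \<forall>r'\<in>hom D (one D) P. leq D P r r' \<and> leq D P r' r \<longrightarrow> r = r') \<and>
        (\<forall>r\<in>hom D (one D) P. \<forall>r'\<in>hom D (one D) P. \<forall>r''\<in>hom D (one D) P.
            leq D P r r' \<and> leq D P r' r'' \<longrightarrow> leq D P r r'')) \<and>
     (\<forall>P\<in>Ob D. \<forall>Q\<in>Ob D. \<forall>f\<in>hom D P Q. \<forall>r\<in>hom D (one D) P. \<forall>r'\<in>hom D (one D) P.
        leq D P r r' \<longrightarrow> leq D Q (Cmp D f r) (Cmp D f r')) \<and>
     (\<forall>P\<in>Ob D. (\<forall>m\<in>Sc D P. mono D m \<and> Cod D m = P) \<and>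
        (\<forall>m\<in>Sc D P. \<forall>m'\<in>Sc D P. same_subobject D m m' \<longrightarrow> m = m')) \<and>
     (\<forall>P\<in>Ob D. \<forall>m\<in>Sc D P. \<forall>Q\<in>Ob D. \<forall>f\<in>hom D Q P.
        \<exists>m'\<in>Sc D Q. \<exists>f'. is_pullback D f m f' m') \<and>
     (\<forall>P\<in>Ob D. \<forall>r\<in>hom D (one D) P. beta D P r \<in> Sc D P) \<and>
     (\<forall>(n::nat) Xs P pr. is_product D {..<n} Xs P pr \<longrightarrow>
        (\<forall>r\<in>hom D (one D) P. \<forall>r'\<in>hom D (one D) P.
           leq D P r r' \<longleftrightarrow> (\<forall>i<n. leq D (Xs i) (Cmp D (pr i) r) (Cmp D (pr i) r'))))"

text \<open>Products are fixed as part of the data: Pp v is the product of the X^{lambda_e}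
  over the edges e with tgt e = v (projections Ppr v e), XPp v is the binary product
  X_v x Pp v with projections XPpr v True / XPpr v False.\<close>
record ('o,'m,'v,'e) lnet =
  Vs   :: "'v set"
  Es   :: "'e set"
  src  :: "'e \<Rightarrow> 'v"
  tgt  :: "'e \<Rightarrow> 'v"
  Xo   :: "'v \<Rightarrow> 'o"
  lam  :: "'e \<Rightarrow> 'm"
  iota :: "'v \<Rightarrow> 'm"
  dlt  :: "'e \<Rightarrow> 'm"
  Pp   :: "'v \<Rightarrow> 'o"
  Ppr  :: "'v \<Rightarrow> 'e \<Rightarrow> 'm"
  XPp  :: "'v \<Rightarrow> 'o"
  XPpr :: "'v \<Rightarrow> bool \<Rightarrow> 'm"
  ahat :: "'v \<Rightarrow> 'm"

text \<open>X_{s(e)}^{lambda_e}: domain of the constraint subobject beta(lambda_e).\<close>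
definition Xl :: "('o,'m) lcat \<Rightarrow> ('o,'m,'v,'e) lnet \<Rightarrow> 'e \<Rightarrow> 'o" where
  "Xl D N e = Dom D (beta D (Xo N (src N e)) (lam N e))"

definition in_edges :: "('o,'m,'v,'e) lnet \<Rightarrow> 'v \<Rightarrow> 'e set" where
  "in_edges N v = {e \<in> Es N. tgt N e = v}"

definition XPfam :: "('o,'m,'v,'e) lnet \<Rightarrow> 'v \<Rightarrow> bool \<Rightarrow> 'o" where
  "XPfam N v b = (if b then Xo N v else Pp N v)"

definition liability_network :: "('o,'m) lcat \<Rightarrow> ('o,'m,'v,'e) lnet \<Rightarrow> bool" where
  "liability_network D N \<longleftrightarrow>
     finite (Vs N) \<and> finite (Es N) \<and>
     (\<forall>e\<in>Es N. src N e \<in> Vs N \<and> tgt N e \<in> Vs N) \<and>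
     (\<forall>v\<in>Vs N. Xo N v \<in> Ob D) \<and>
     (\<forall>e\<in>Es N. lam N e \<in> hom D (one D) (Xo N (src N e))) \<and>
     (\<forall>v\<in>Vs N. iota N v \<in> hom D (one D) (Xo N v)) \<and>
     (\<forall>e\<in>Es N. dlt N e \<in> hom D (Xo N (src N e)) (Xl D N e)) \<and>
     (\<forall>v\<in>Vs N. is_product D (in_edges N v) (Xl D N) (Pp N v) (Ppr N v)) \<and>
     (\<forall>v\<in>Vs N. is_product D (UNIV::bool set) (XPfam N v) (XPp N v) (XPpr N v)) \<and>
     (\<forall>v\<in>Vs N. ahat N v \<in> hom D (XPp N v) (Xo N v))"

text \<open>Partial aggregator alpha_v = ahat_v o (iota_v x id) o (Pp v = 1 x Pp v),
  i.e. ahat_v o <iota_v o !, id>.\<close>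
definition alpha :: "('o,'m) lcat \<Rightarrow> ('o,'m,'v,'e) lnet \<Rightarrow> 'v \<Rightarrow> 'm" where
  "alpha D N v = Cmp D (ahat N v)
     (tup D (UNIV::bool set) (XPp N v) (XPpr N v) (Pp N v)
        (\<lambda>b. if b then Cmp D (iota N v) (term_map D (one D) (Pp N v)) else Idn D (Pp N v)))"

datatype ('v,'e) iobj = IV 'v | IE 'e | HD 'v | HA 'v
  (* vertex v, vertex e*, hyperedge h_v^delta, hyperedge h_v^alpha *)

datatype ('v,'e) iarr = DV 'v | DE 'e | AE 'e | AV 'v
  (* h_v^delta -> v, h_{s e}^delta -> e*, h_{t e}^alpha -> e*, h_v^alpha -> v *)

definition IObj :: "('o,'m,'v,'e) lnet \<Rightarrow> ('v,'e) iobj set" where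
  "IObj N = IV ` Vs N \<union> IE ` Es N \<union> HD ` Vs N \<union> HA ` Vs N"

definition IArr :: "('o,'m,'v,'e) lnet \<Rightarrow> ('v,'e) iarr set" where
  "IArr N = DV ` Vs N \<union> DE ` Es N \<union> AE ` Es N \<union> AV ` Vs N"

fun isrc :: "('o,'m,'v,'e) lnet \<Rightarrow> ('v,'e) iarr \<Rightarrow> ('v,'e) iobj" where
  "isrc N (DV v) = HD v"
| "isrc N (DE e) = HD (src N e)"
| "isrc N (AE e) = HA (tgt N e)"
| "isrc N (AV v) = HA v"

fun itgt :: "('o,'m,'v,'e) lnet \<Rightarrow> ('v,'e) iarr \<Rightarrow> ('v,'e) iobj" where
  "itgt N (DV v) = IV v"
| "itgt N (DE e) = IE e"
| "itgt N (AE e) = IE e"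
| "itgt N (AV v) = IV v"

fun Lobj :: "('o,'m) lcat \<Rightarrow> ('o,'m,'v,'e) lnet \<Rightarrow> ('v,'e) iobj \<Rightarrow> 'o" where
  "Lobj D N (IV v) = Xo N v"
| "Lobj D N (IE e) = Xl D N e"
| "Lobj D N (HD v) = Xo N v"
| "Lobj D N (HA v) = Pp N v"

fun Larr :: "('o,'m) lcat \<Rightarrow> ('o,'m,'v,'e) lnet \<Rightarrow> ('v,'e) iarr \<Rightarrow> 'm" where
  "Larr D N (DV v) = Idn D (Xo N v)"
| "Larr D N (DE e) = dlt N e"
| "Larr D N (AE e) = Ppr N (tgt N e) e"
| "Larr D N (AV v) = alpha D N v"

text \<open>Cones over the liability sheaf (identities of the incidence category impose no condition)
  and limits (the global-section object H^0 with its limit projections c).\<close>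
definition is_cone :: "('o,'m) lcat \<Rightarrow> ('o,'m,'v,'e) lnet \<Rightarrow> 'o \<Rightarrow> (('v,'e) iobj \<Rightarrow> 'm) \<Rightarrow> bool" where
  "is_cone D N A c \<longleftrightarrow> A \<in> Ob D \<and>
     (\<forall>y\<in>IObj N. c y \<in> hom D A (Lobj D N y)) \<and>
     (\<forall>a\<in>IArr N. Cmp D (Larr D N a) (c (isrc N a)) = c (itgt N a))"

definition is_limit :: "('o,'m) lcat \<Rightarrow> ('o,'m,'v,'e) lnet \<Rightarrow> 'o \<Rightarrow> (('v,'e) iobj \<Rightarrow> 'm) \<Rightarrow> bool" where
  "is_limit D N H c \<longleftrightarrow> is_cone D N H c \<and>
     (\<forall>A d. is_cone D N A d \<longrightarrow>
        (\<exists>!u. u \<in> hom D A H \<and> (\<forall>y\<in>IObj N. Cmp D (c y) u = d y)))"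

definition solution_families :: "('o,'m) lcat \<Rightarrow> ('o,'m,'v,'e) lnet \<Rightarrow> (('v \<Rightarrow> 'm) \<times> ('e \<Rightarrow> 'm)) set" where
  "solution_families D N = {(x, p).
     x \<in> extensional (Vs N) \<and> p \<in> extensional (Es N) \<and>
     (\<forall>v\<in>Vs N. x v \<in> hom D (one D) (Xo N v)) \<and>
     (\<forall>e\<in>Es N. p e \<in> hom D (one D) (Xl D N e)) \<and>
     (\<forall>e\<in>Es N. p e = Cmp D (dlt N e) (x (src N e))) \<and>
     (\<forall>v\<in>Vs N. x v = Cmp D (alpha D N v) (tup D (in_edges N v) (Pp N v) (Ppr N v) (one D) p))}"

end

theory Submission
  imports Defs
begin

text \<open>By the universal property of the limit, global elements of H correspond to cones with
  apex 1 over the liability sheaf. Such a cone is determined by its components x_v at v and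
  p_e at e*: its component at h_v^delta equals x_v because the leg h_v^delta -> v is an
  identity, and its component at h_v^alpha is forced to be the tuple of the p_e by the
  universal property of the product. The remaining cone conditions, at the legs
  h_{s e}^delta -> e* and h_v^alpha -> v, are exactly the two equations.\<close>

lemma hom_dom_in_Ob:
  assumes "category C" "f \<in> hom C a b" shows "a \<in> Ob C"
  using assms unfolding category_def hom_def by auto

lemma id_in_hom:
  assumes "category C" "a \<in> Ob C" shows "Idn C a \<in> hom C a a"
  using assms unfolding category_def by auto

lemma comp_in_hom:
  assumes "category C" "f \<in> hom C a b" "g \<in> hom C b d" shows "Cmp C g f \<in> hom C a d"
  using assms unfolding category_def hom_def by auto

lemma comp_assoc:
  assumes "category C" "f \<in> hom C a b" "g \<in> hom C b d" "h \<in> hom C d k"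
  shows "Cmp C h (Cmp C g f) = Cmp C (Cmp C h g) f"
  using assms unfolding category_def hom_def by auto

lemma id_comp:
  assumes "category C" "f \<in> hom C a b" shows "Cmp C (Idn C b) f = f"
  using assms unfolding category_def hom_def by auto

lemma term_map_in_hom:
  assumes "terminal C t" "a \<in> Ob C" shows "term_map C t a \<in> hom C a t"
proof -
  have "\<exists>!f. f \<in> hom C a t" using assms unfolding terminal_def by blast
  then show ?thesis unfolding term_map_def by (rule theI')
qed

lemma
  assumes "is_product C I Xs P pr" "A \<in> Ob C" "\<forall>i\<in>I. f i \<in> hom C A (Xs i)"
  shows tup_in_hom: "tup C I P pr A f \<in> hom C A P"
    and proj_tup: "\<forall>i\<in>I. Cmp C (pr i) (tup C I P pr A f) = f i"
proof -
  have "\<exists>!u. u \<in> hom C A P \<and> (\<forall>i\<in>I. Cmp C (pr i) u = f i)"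
    using assms unfolding is_product_def by blast
  then have "tup C I P pr A f \<in> hom C A P \<and> (\<forall>i\<in>I. Cmp C (pr i) (tup C I P pr A f) = f i)"
    unfolding tup_def by (rule theI')
  then show "tup C I P pr A f \<in> hom C A P" "\<forall>i\<in>I. Cmp C (pr i) (tup C I P pr A f) = f i"
    by auto
qed

lemma tup_unique:
  assumes "is_product C I Xs P pr" "A \<in> Ob C" "\<forall>i\<in>I. f i \<in> hom C A (Xs i)"
    and "u \<in> hom C A P" "\<forall>i\<in>I. Cmp C (pr i) u = f i"
  shows "u = tup C I P pr A f"
proof -
  have "\<exists>!u. u \<in> hom C A P \<and> (\<forall>i\<in>I. Cmp C (pr i) u = f i)"
    using assms(1-3) unfolding is_product_def by blast
  then show ?thesis
    using assms(4,5) tup_in_hom[OF assms(1-3)] proj_tup[OF assms(1-3)] by blast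
qed

lemma
  assumes "liability_network D N"
  shows src_in_Vs: "e \<in> Es N \<Longrightarrow> src N e \<in> Vs N"
    and tgt_in_Vs: "e \<in> Es N \<Longrightarrow> tgt N e \<in> Vs N"
    and Xo_in_Ob: "v \<in> Vs N \<Longrightarrow> Xo N v \<in> Ob D"
    and iota_in_hom: "v \<in> Vs N \<Longrightarrow> iota N v \<in> hom D (one D) (Xo N v)"
    and dlt_in_hom: "e \<in> Es N \<Longrightarrow> dlt N e \<in> hom D (Xo N (src N e)) (Xl D N e)"
    and in_edges_product:
      "v \<in> Vs N \<Longrightarrow> is_product D (in_edges N v) (Xl D N) (Pp N v) (Ppr N v)"
    and XPp_product: "v \<in> Vs N \<Longrightarrow> is_product D UNIV (XPfam N v) (XPp N v) (XPpr N v)"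
    and ahat_in_hom: "v \<in> Vs N \<Longrightarrow> ahat N v \<in> hom D (XPp N v) (Xo N v)"
  using assms unfolding liability_network_def by auto

lemma alpha_in_hom:
  assumes "category D" "terminal D (one D)" "liability_network D N" "v \<in> Vs N"
  shows "alpha D N v \<in> hom D (Pp N v) (Xo N v)"
proof -
  have Pp: "Pp N v \<in> Ob D"
    using in_edges_product[OF assms(3,4)] unfolding is_product_def by blast
  let ?f = "\<lambda>b. if b then Cmp D (iota N v) (term_map D (one D) (Pp N v)) else Idn D (Pp N v)"
  have "\<forall>b\<in>UNIV. ?f b \<in> hom D (Pp N v) (XPfam N v b)"
    using comp_in_hom[OF assms(1) term_map_in_hom[OF assms(2) Pp] iota_in_hom[OF assms(3,4)]]
      id_in_hom[OF assms(1) Pp]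
    by (auto simp: XPfam_def)
  from comp_in_hom[OF assms(1) tup_in_hom[OF XPp_product[OF assms(3,4)] Pp this]
      ahat_in_hom[OF assms(3,4)]]
  show ?thesis unfolding alpha_def .
qed

lemma in_IObj_iff [simp]:
  "IV v \<in> IObj N \<longleftrightarrow> v \<in> Vs N" "IE e \<in> IObj N \<longleftrightarrow> e \<in> Es N"
  "HD v \<in> IObj N \<longleftrightarrow> v \<in> Vs N" "HA v \<in> IObj N \<longleftrightarrow> v \<in> Vs N"
  by (auto simp: IObj_def)

lemma in_IArr_iff [simp]:
  "DV v \<in> IArr N \<longleftrightarrow> v \<in> Vs N" "DE e \<in> IArr N \<longleftrightarrow> e \<in> Es N"
  "AE e \<in> IArr N \<longleftrightarrow> e \<in> Es N" "AV v \<in> IArr N \<longleftrightarrow> v \<in> Vs N"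
  by (auto simp: IArr_def)

lemma IObj_cases [consumes 1, case_names IV IE HD HA]:
  assumes "y \<in> IObj N"
  obtains (IV) v where "v \<in> Vs N" "y = IV v" | (IE) e where "e \<in> Es N" "y = IE e"
    | (HD) v where "v \<in> Vs N" "y = HD v" | (HA) v where "v \<in> Vs N" "y = HA v"
  using assms unfolding IObj_def by blast

lemma IArr_cases [consumes 1, case_names DV DE AE AV]:
  assumes "a \<in> IArr N"
  obtains (DV) v where "v \<in> Vs N" "a = DV v" | (DE) e where "e \<in> Es N" "a = DE e"
    | (AE) e where "e \<in> Es N" "a = AE e" | (AV) v where "v \<in> Vs N" "a = AV v"
  using assms unfolding IArr_def by blast

lemma liability_sheaf_well_typed:
  assumes "category D" "terminal D (one D)" "liability_network D N" "a \<in> IArr N"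
  shows "isrc N a \<in> IObj N \<and> itgt N a \<in> IObj N \<and>
    Larr D N a \<in> hom D (Lobj D N (isrc N a)) (Lobj D N (itgt N a))"
  using assms(4)
proof (cases rule: IArr_cases)
  case (DV v)
  then show ?thesis using id_in_hom[OF assms(1) Xo_in_Ob[OF assms(3)]] by simp
next
  case (DE e)
  then show ?thesis using src_in_Vs[OF assms(3)] dlt_in_hom[OF assms(3)] by simp
next
  case (AE e)
  then show ?thesis
    using tgt_in_Vs[OF assms(3)] in_edges_product[OF assms(3)]
    unfolding is_product_def in_edges_def by simp
next
  case (AV v)
  then show ?thesis using alpha_in_hom[OF assms(1-3)] by simp
qed

lemma is_cone_component:
  assumes "is_cone D N A d" "y \<in> IObj N"
  shows "d y \<in> hom D A (Lobj D N y)"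
  using assms unfolding is_cone_def by blast

lemma is_cone_commutes:
  assumes "is_cone D N A d" "a \<in> IArr N"
  shows "Cmp D (Larr D N a) (d (isrc N a)) = d (itgt N a)"
  using assms unfolding is_cone_def by blast

lemma is_cone_precomp:
  assumes "category D" "terminal D (one D)" "liability_network D N"
    and "is_cone D N H c" "\<sigma> \<in> hom D A H"
  shows "is_cone D N A (\<lambda>y. Cmp D (c y) \<sigma>)"
  unfolding is_cone_def
proof (intro conjI ballI)
  show "A \<in> Ob D" using hom_dom_in_Ob[OF assms(1,5)] .
next
  fix y assume "y \<in> IObj N"
  then show "Cmp D (c y) \<sigma> \<in> hom D A (Lobj D N y)"
    using comp_in_hom[OF assms(1,5) is_cone_component[OF assms(4)]] by blast
next
  fix a assume a: "a \<in> IArr N"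
  note arr = liability_sheaf_well_typed[OF assms(1-3) a]
  have "Cmp D (Larr D N a) (Cmp D (c (isrc N a)) \<sigma>) = Cmp D (Cmp D (Larr D N a) (c (isrc N a))) \<sigma>"
    using comp_assoc[OF assms(1,5) is_cone_component[OF assms(4)]] arr by blast
  then show "Cmp D (Larr D N a) (Cmp D (c (isrc N a)) \<sigma>) = Cmp D (c (itgt N a)) \<sigma>"
    using is_cone_commutes[OF assms(4) a] by simp
qed

lemma limit_factor:
  assumes "is_limit D N H c" "is_cone D N A d"
  obtains u where "u \<in> hom D A H" "\<forall>y\<in>IObj N. Cmp D (c y) u = d y"
  using assms unfolding is_limit_def by blast

lemma limit_factor_unique:
  assumes "is_limit D N H c" "is_cone D N A d"
    and "u \<in> hom D A H" "\<forall>y\<in>IObj N. Cmp D (c y) u = d y"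
    and "u' \<in> hom D A H" "\<forall>y\<in>IObj N. Cmp D (c y) u' = d y"
  shows "u = u'"
proof -
  have "\<exists>!u. u \<in> hom D A H \<and> (\<forall>y\<in>IObj N. Cmp D (c y) u = d y)"
    using assms(1,2) unfolding is_limit_def by blast
  then show ?thesis using assms(3-6) by blast
qed

text \<open>Extensionality makes a cone determined by its components, as the bijection with
  global elements requires.\<close>
definition cones :: "('o,'m) lcat \<Rightarrow> ('o,'m,'v,'e) lnet \<Rightarrow> 'o \<Rightarrow> (('v,'e) iobj \<Rightarrow> 'm) set" where
  "cones D N A = {d \<in> extensional (IObj N). is_cone D N A d}"

lemma limit_hom_bij_cones:
  assumes "category D" "terminal D (one D)" "liability_network D N" "is_limit D N H c"
  shows "bij_betw (\<lambda>\<sigma>. \<lambda>y\<in>IObj N. Cmp D (c y) \<sigma>) (hom D A H) (cones D N A)"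
  unfolding bij_betw_def
proof (intro conjI)
  have cone: "is_cone D N H c" using assms(4) unfolding is_limit_def by blast
  show "inj_on (\<lambda>\<sigma>. \<lambda>y\<in>IObj N. Cmp D (c y) \<sigma>) (hom D A H)"
  proof (rule inj_onI)
    fix \<sigma> \<sigma>' assume \<sigma>: "\<sigma> \<in> hom D A H" and \<sigma>': "\<sigma>' \<in> hom D A H"
      and eq: "(\<lambda>y\<in>IObj N. Cmp D (c y) \<sigma>) = (\<lambda>y\<in>IObj N. Cmp D (c y) \<sigma>')"
    have "\<forall>y\<in>IObj N. Cmp D (c y) \<sigma>' = Cmp D (c y) \<sigma>"
    proof
      fix y assume "y \<in> IObj N"
      then show "Cmp D (c y) \<sigma>' = Cmp D (c y) \<sigma>" using fun_cong[OF eq, of y] by simp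
    qed
    then show "\<sigma> = \<sigma>'"
      using limit_factor_unique[OF assms(4) is_cone_precomp[OF assms(1-3) cone \<sigma>] \<sigma> _ \<sigma>'] by blast
  qed
  show "(\<lambda>\<sigma>. \<lambda>y\<in>IObj N. Cmp D (c y) \<sigma>) ` hom D A H = cones D N A"
  proof (intro equalityI subsetI)
    fix d assume "d \<in> (\<lambda>\<sigma>. \<lambda>y\<in>IObj N. Cmp D (c y) \<sigma>) ` hom D A H"
    then obtain \<sigma> where \<sigma>: "\<sigma> \<in> hom D A H" and d: "d = (\<lambda>y\<in>IObj N. Cmp D (c y) \<sigma>)"
      by blast
    have "is_cone D N A (\<lambda>y. Cmp D (c y) \<sigma>)" using is_cone_precomp[OF assms(1-3) cone \<sigma>] .
    then have "is_cone D N A d"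
      using liability_sheaf_well_typed[OF assms(1-3)] unfolding d is_cone_def by simp
    then show "d \<in> cones D N A" unfolding cones_def d by simp
  next
    fix d assume "d \<in> cones D N A"
    then have d: "is_cone D N A d" "d \<in> extensional (IObj N)" unfolding cones_def by auto
    obtain u where "u \<in> hom D A H" "\<forall>y\<in>IObj N. Cmp D (c y) u = d y"
      using limit_factor[OF assms(4) d(1)] .
    then show "d \<in> (\<lambda>\<sigma>. \<lambda>y\<in>IObj N. Cmp D (c y) \<sigma>) ` hom D A H"
      using d(2) by (intro image_eqI[of _ _ u]) (auto intro!: extensionalityI[where A = "IObj N"])
  qed
qed

lemma cone_HD_eq_IV:
  assumes "category D" "is_cone D N A d" "v \<in> Vs N"
  shows "d (HD v) = d (IV v)"
proof -
  have "d (HD v) \<in> hom D A (Xo N v)"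
    using is_cone_component[OF assms(2), of "HD v"] assms(3) by simp
  then show ?thesis
    using id_comp[OF assms(1)] is_cone_commutes[OF assms(2), of "DV v"] assms(3) by simp
qed

lemma cone_HA_eq_tup:
  assumes "liability_network D N" "is_cone D N A d" "v \<in> Vs N"
  shows "d (HA v) = tup D (in_edges N v) (Pp N v) (Ppr N v) A (\<lambda>e\<in>Es N. d (IE e))"
proof (rule tup_unique[OF in_edges_product[OF assms(1,3)]])
  show "A \<in> Ob D" using assms(2) unfolding is_cone_def by blast
  show "\<forall>e\<in>in_edges N v. (\<lambda>e\<in>Es N. d (IE e)) e \<in> hom D A (Xl D N e)"
    using is_cone_component[OF assms(2), where y = "IE e" for e] by (simp add: in_edges_def)
  show "d (HA v) \<in> hom D A (Pp N v)"
    using is_cone_component[OF assms(2), of "HA v"] assms(3) by simp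
  show "\<forall>e\<in>in_edges N v. Cmp D (Ppr N v e) (d (HA v)) = (\<lambda>e\<in>Es N. d (IE e)) e"
    using is_cone_commutes[OF assms(2), where a = "AE e" for e] by (auto simp: in_edges_def)
qed

definition cone_components ::
  "('o,'m,'v,'e) lnet \<Rightarrow> (('v,'e) iobj \<Rightarrow> 'm) \<Rightarrow> ('v \<Rightarrow> 'm) \<times> ('e \<Rightarrow> 'm)" where
  "cone_components N d = (\<lambda>v\<in>Vs N. d (IV v), \<lambda>e\<in>Es N. d (IE e))"

definition solution_cone ::
  "('o,'m) lcat \<Rightarrow> ('o,'m,'v,'e) lnet \<Rightarrow> ('v \<Rightarrow> 'm) \<Rightarrow> ('e \<Rightarrow> 'm) \<Rightarrow> ('v,'e) iobj \<Rightarrow> 'm" where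
  "solution_cone D N x p = (\<lambda>y\<in>IObj N. case y of
      IV v \<Rightarrow> x v | IE e \<Rightarrow> p e | HD v \<Rightarrow> x v
    | HA v \<Rightarrow> tup D (in_edges N v) (Pp N v) (Ppr N v) (one D) p)"

lemma cone_components_in_solution_families:
  assumes "category D" "liability_network D N" "is_cone D N (one D) d"
  shows "cone_components N d \<in> solution_families D N"
proof -
  have "d (IE e) = Cmp D (dlt N e) (d (IV (src N e)))" if "e \<in> Es N" for e
    using is_cone_commutes[OF assms(3), of "DE e"] cone_HD_eq_IV[OF assms(1,3)]
      src_in_Vs[OF assms(2)] that by simp
  moreover have "d (IV v) = Cmp D (alpha D N v)
      (tup D (in_edges N v) (Pp N v) (Ppr N v) (one D) (\<lambda>e\<in>Es N. d (IE e)))" if "v \<in> Vs N" for v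
    using is_cone_commutes[OF assms(3), of "AV v"] cone_HA_eq_tup[OF assms(2,3)] that by simp
  moreover have "d (IV v) \<in> hom D (one D) (Xo N v)" if "v \<in> Vs N" for v
    using is_cone_component[OF assms(3), of "IV v"] that by simp
  moreover have "d (IE e) \<in> hom D (one D) (Xl D N e)" if "e \<in> Es N" for e
    using is_cone_component[OF assms(3), of "IE e"] that by simp
  ultimately show ?thesis
    using src_in_Vs[OF assms(2)] by (simp add: solution_families_def cone_components_def)
qed

lemma solution_cone_is_cone:
  assumes "category D" "terminal D (one D)" "liability_network D N"
    and "(x, p) \<in> solution_families D N"
  shows "is_cone D N (one D) (solution_cone D N x p)"
proof -
  have one: "one D \<in> Ob D" using assms(2) unfolding terminal_def by blast
  have x: "\<forall>v\<in>Vs N. x v \<in> hom D (one D) (Xo N v)"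
    and p: "\<forall>e\<in>Es N. p e \<in> hom D (one D) (Xl D N e)"
    and p_eq: "\<forall>e\<in>Es N. p e = Cmp D (dlt N e) (x (src N e))"
    and x_eq: "\<forall>v\<in>Vs N. x v = Cmp D (alpha D N v) (tup D (in_edges N v) (Pp N v) (Ppr N v) (one D) p)"
    using assms(4) unfolding solution_families_def by auto
  have "\<forall>e\<in>in_edges N v. p e \<in> hom D (one D) (Xl D N e)" for v
    using p by (simp add: in_edges_def)
  note tup = tup_in_hom[OF in_edges_product[OF assms(3)] one this]
    proj_tup[OF in_edges_product[OF assms(3)] one this]
  show ?thesis
    unfolding is_cone_def
  proof (intro conjI ballI)
    show "one D \<in> Ob D" by (rule one)
  next
    fix y assume "y \<in> IObj N"
    then show "solution_cone D N x p y \<in> hom D (one D) (Lobj D N y)"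
      by (cases rule: IObj_cases) (simp_all add: solution_cone_def x p tup)
  next
    fix a assume "a \<in> IArr N"
    then show "Cmp D (Larr D N a) (solution_cone D N x p (isrc N a)) = solution_cone D N x p (itgt N a)"
    proof (cases rule: IArr_cases)
      case (DV v)
      then show ?thesis using id_comp[OF assms(1) bspec[OF x DV(1)]] by (simp add: solution_cone_def)
    next
      case (DE e)
      then show ?thesis using src_in_Vs[OF assms(3)] p_eq by (simp add: solution_cone_def)
    next
      case (AE e)
      then show ?thesis using tgt_in_Vs[OF assms(3)] tup by (simp add: solution_cone_def in_edges_def)
    next
      case (AV v)
      then show ?thesis using x_eq by (simp add: solution_cone_def)
    qed
  qed
qed

lemma cones_one_bij_solution_families:
  assumes "category D" "terminal D (one D)" "liability_network D N"
  shows "bij_betw (cone_components N) (cones D N (one D)) (solution_families D N)"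
proof (rule bij_betwI[where g = "case_prod (solution_cone D N)"])
  show "cone_components N \<in> cones D N (one D) \<rightarrow> solution_families D N"
    using cone_components_in_solution_families[OF assms(1,3)] by (auto simp: cones_def)
  show "case_prod (solution_cone D N) \<in> solution_families D N \<rightarrow> cones D N (one D)"
    using solution_cone_is_cone[OF assms] by (auto simp: cones_def solution_cone_def)
  show "case_prod (solution_cone D N) (cone_components N d) = d" if "d \<in> cones D N (one D)" for d
  proof (rule extensionalityI[where A = "IObj N"])
    have cone: "is_cone D N (one D) d" and "d \<in> extensional (IObj N)"
      using that unfolding cones_def by auto
    show "d \<in> extensional (IObj N)" by fact
    show "case_prod (solution_cone D N) (cone_components N d) \<in> extensional (IObj N)"
      by (simp add: cone_components_def solution_cone_def)
    fix y assume "y \<in> IObj N"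
    then show "case_prod (solution_cone D N) (cone_components N d) y = d y"
      by (cases rule: IObj_cases)
        (simp_all add: cone_components_def solution_cone_def cone_HD_eq_IV[OF assms(1) cone]
          cone_HA_eq_tup[OF assms(3) cone])
  qed
  show "cone_components N (case_prod (solution_cone D N) xp) = xp"
    if "xp \<in> solution_families D N" for xp
  proof -
    obtain x p where xp: "xp = (x, p)" by (cases xp)
    moreover have "x \<in> extensional (Vs N)" "p \<in> extensional (Es N)"
      using that unfolding xp solution_families_def by auto
    ultimately show ?thesis
      by (auto simp: cone_components_def solution_cone_def extensional_def fun_eq_iff)
  qed
qed

theorem mainTheorem1:
  fixes D :: "('o,'m) lcat" and N :: "('o,'m,'v,'e) lnet"
    and H :: 'o and c :: "('v,'e) iobj \<Rightarrow> 'm"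
  assumes "liability_category D"
    and "liability_network D N"
    and "is_limit D N H c"
  shows "bij_betw
           (\<lambda>\<sigma>. (\<lambda>v\<in>Vs N. Cmp D (c (IV v)) \<sigma>, \<lambda>e\<in>Es N. Cmp D (c (IE e)) \<sigma>))
           (hom D (one D) H)
           (solution_families D N)"
proof -
  have cat: "category D" and trm: "terminal D (one D)"
    using assms(1) unfolding liability_category_def by auto
  have "bij_betw (cone_components N \<circ> (\<lambda>\<sigma>. \<lambda>y\<in>IObj N. Cmp D (c y) \<sigma>))
      (hom D (one D) H) (solution_families D N)"
    using bij_betw_trans[OF limit_hom_bij_cones[OF cat trm assms(2,3)]
        cones_one_bij_solution_families[OF cat trm assms(2)]] .
  then show ?thesis
    by (rule bij_betw_cong[THEN iffD1, rotated]) (auto simp: cone_components_def intro!: restrict_ext)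
qed

end
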